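(* Let $G$ be a connected graph with at least $5$ vertices and let $H$ be a connected component of the complement $\overline{G}$ such that $H$ is isomorphic to the cycle $C_4$. Then no vertex of $H$ is a basis forced vertex of $G$.
   Context: All graphs are finite and simple. $\overline{G}$ denotes the complement graph. For vertices $u,v$ of a connected graph $G$, $d(u,v)$ is the length of a shortest $u$–$v$ path. A set $R\subseteq V(G)$ is a resolving set if for all distinct $x,y\in V(G)$ there is $r\in R$ with $d(r,x)\neq d(r,y)$. The metric dimension $\dim(G)$ is the minimum cardinality of a resolving set, and a resolving set of cardinality $\dim(G)$ is a metric basis. A vertex is a basis forced vertex if it belongs to every metric basis of $G$. *)

theory Defs
  imports Main
begin

definition simple_graph :: "'a set \<Rightarrow> ('a \<Rightarrow> 'a \<Rightarrow> bool) \<Rightarrow> bool" where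
  "simple_graph V E \<longleftrightarrow> finite V \<and> (\<forall>u v. E u v \<longrightarrow> u \<in> V \<and> v \<in> V)
     \<and> (\<forall>u v. E u v \<longrightarrow> E v u) \<and> (\<forall>u. \<not> E u u)"

definition is_walk :: "'a set \<Rightarrow> ('a \<Rightarrow> 'a \<Rightarrow> bool) \<Rightarrow> 'a list \<Rightarrow> bool" where
  "is_walk V E xs \<longleftrightarrow> xs \<noteq> [] \<and> set xs \<subseteq> V \<and> (\<forall>i. Suc i < length xs \<longrightarrow> E (xs ! i) (xs ! Suc i))"

definition connected_graph :: "'a set \<Rightarrow> ('a \<Rightarrow> 'a \<Rightarrow> bool) \<Rightarrow> bool" where
  "connected_graph V E \<longleftrightarrow> V \<noteq> {} \<and>
     (\<forall>u\<in>V. \<forall>v\<in>V. \<exists>xs. is_walk V E xs \<and> hd xs = u \<and> last xs = v)"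

text \<open>Distance: length (number of edges) of a shortest walk.\<close>
definition gdist :: "'a set \<Rightarrow> ('a \<Rightarrow> 'a \<Rightarrow> bool) \<Rightarrow> 'a \<Rightarrow> 'a \<Rightarrow> nat" where
  "gdist V E u v = (LEAST n. \<exists>xs. is_walk V E xs \<and> hd xs = u \<and> last xs = v \<and> length xs = Suc n)"

definition resolving_set :: "'a set \<Rightarrow> ('a \<Rightarrow> 'a \<Rightarrow> bool) \<Rightarrow> 'a set \<Rightarrow> bool" where
  "resolving_set V E R \<longleftrightarrow> R \<subseteq> V \<and>
     (\<forall>x\<in>V. \<forall>y\<in>V. x \<noteq> y \<longrightarrow> (\<exists>r\<in>R. gdist V E r x \<noteq> gdist V E r y))"

definition metric_dim :: "'a set \<Rightarrow> ('a \<Rightarrow> 'a \<Rightarrow> bool) \<Rightarrow> nat" where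
  "metric_dim V E = (LEAST k. \<exists>R. resolving_set V E R \<and> card R = k)"

definition metric_basis :: "'a set \<Rightarrow> ('a \<Rightarrow> 'a \<Rightarrow> bool) \<Rightarrow> 'a set \<Rightarrow> bool" where
  "metric_basis V E R \<longleftrightarrow> resolving_set V E R \<and> card R = metric_dim V E"

definition basis_forced :: "'a set \<Rightarrow> ('a \<Rightarrow> 'a \<Rightarrow> bool) \<Rightarrow> 'a \<Rightarrow> bool" where
  "basis_forced V E v \<longleftrightarrow> (\<forall>R. metric_basis V E R \<longrightarrow> v \<in> R)"

definition compl_edges :: "'a set \<Rightarrow> ('a \<Rightarrow> 'a \<Rightarrow> bool) \<Rightarrow> 'a \<Rightarrow> 'a \<Rightarrow> bool" where
  "compl_edges V E u v \<longleftrightarrow> u \<in> V \<and> v \<in> V \<and> u \<noteq> v \<and> \<not> E u v"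

definition induced :: "('a \<Rightarrow> 'a \<Rightarrow> bool) \<Rightarrow> 'a set \<Rightarrow> 'a \<Rightarrow> 'a \<Rightarrow> bool" where
  "induced E C u v \<longleftrightarrow> u \<in> C \<and> v \<in> C \<and> E u v"

definition component :: "'a set \<Rightarrow> ('a \<Rightarrow> 'a \<Rightarrow> bool) \<Rightarrow> 'a set \<Rightarrow> bool" where
  "component V E C \<longleftrightarrow> C \<subseteq> V \<and> connected_graph C (induced E C) \<and>
     (\<forall>u v. u \<in> C \<longrightarrow> E u v \<longrightarrow> v \<in> C)"

definition C4_edges :: "nat \<Rightarrow> nat \<Rightarrow> bool" where
  "C4_edges i j \<longleftrightarrow> i < 4 \<and> j < 4 \<and> (j = (i + 1) mod 4 \<or> i = (j + 1) mod 4)"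

definition graph_iso :: "'a set \<Rightarrow> ('a \<Rightarrow> 'a \<Rightarrow> bool) \<Rightarrow> 'b set \<Rightarrow> ('b \<Rightarrow> 'b \<Rightarrow> bool) \<Rightarrow> bool" where
  "graph_iso V E W F \<longleftrightarrow> (\<exists>f. bij_betw f V W \<and> (\<forall>u\<in>V. \<forall>v\<in>V. E u v \<longleftrightarrow> F (f u) (f v)))"

end

theory Submission
  imports Defs "HOL-Combinatorics.Transposition"
begin

(* In G, the vertex set C of the C4-component of the complement splits into two adjacent
   pairs {v, v'} of true twins (opposite vertices of the C4), and every vertex of C is
   adjacent to every vertex outside C.  Hence G has diameter two, so distances are 0, 1
   or 2, and swapping two twins maps metric bases to metric bases.  A metric basis R
   never contains both v and v': R contains a vertex r of the other twin pair, and then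
   R - {v} is still resolving, because v' separates everything that v separates except v
   from its neighbours outside C, which r separates.  So if v lies in a metric basis R,
   swapping v and v' gives a metric basis avoiding v. *)

definition dist2 :: "('a \<Rightarrow> 'a \<Rightarrow> bool) \<Rightarrow> 'a \<Rightarrow> 'a \<Rightarrow> nat" where
  "dist2 E x y = (if x = y then 0 else if E x y then 1 else 2)"

definition diameter_le_two :: "'a set \<Rightarrow> ('a \<Rightarrow> 'a \<Rightarrow> bool) \<Rightarrow> bool" where
  "diameter_le_two V E \<longleftrightarrow> (\<forall>x\<in>V. \<forall>y\<in>V. x \<noteq> y \<longrightarrow> \<not> E x y \<longrightarrow> (\<exists>z. E x z \<and> E z y))"

definition twins :: "('a \<Rightarrow> 'a \<Rightarrow> bool) \<Rightarrow> 'a \<Rightarrow> 'a \<Rightarrow> bool" where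
  "twins E a b \<longleftrightarrow> a \<noteq> b \<and> (\<forall>z. z \<noteq> a \<longrightarrow> z \<noteq> b \<longrightarrow> (E a z \<longleftrightarrow> E b z))"

lemma simple_graph_symp: "simple_graph V E \<Longrightarrow> symp E"
  by (simp add: simple_graph_def symp_def)

lemma dist2_commute: "symp E \<Longrightarrow> dist2 E x y = dist2 E y x"
  by (auto simp: dist2_def dest: sympD)

lemma dist2_twins: "twins E a b \<Longrightarrow> x \<noteq> a \<Longrightarrow> x \<noteq> b \<Longrightarrow> dist2 E a x = dist2 E b x"
  by (simp add: dist2_def twins_def)

lemma dist2_twin_separates:
  assumes "twins E v v'" "x \<noteq> v" "y \<noteq> v" "x \<noteq> y" "dist2 E v x \<noteq> dist2 E v y"
  shows "dist2 E v' x \<noteq> dist2 E v' y"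
proof (cases "x = v' \<or> y = v'")
  case True
  then show ?thesis using assms(4) by (auto simp: dist2_def)
next
  case False
  then show ?thesis using assms dist2_twins[OF assms(1)] by metis
qed

lemma dist2_transpose_twins:
  assumes "symp E" "twins E a b"
  shows "dist2 E (transpose a b r) (transpose a b x) = dist2 E r x"
proof -
  have "a \<noteq> b" using assms(2) by (simp add: twins_def)
  have first: "dist2 E b y = dist2 E a y" if "y \<noteq> a" "y \<noteq> b" for y
    using dist2_twins[OF assms(2) that] by simp
  have second: "dist2 E y b = dist2 E y a" if "y \<noteq> a" "y \<noteq> b" for y
    using first[OF that] dist2_commute[OF assms(1)] by metis
  have "dist2 E b a = dist2 E a b" by (rule dist2_commute[OF assms(1)])
  with \<open>a \<noteq> b\<close> show ?thesis
    by (cases "r = a"; cases "r = b"; cases "x = a"; cases "x = b")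
      (simp_all add: first second dist2_def[of E a a] dist2_def[of E b b])
qed

lemma dist2_less_length_walk:
  assumes "is_walk V E xs"
  shows "dist2 E (hd xs) (last xs) < length xs"
proof -
  have "xs \<noteq> []" using assms by (simp add: is_walk_def)
  then consider x where "xs = [x]" | x y where "xs = [x, y]" | "2 < length xs"
    by (cases xs rule: remdups_adj.cases) auto
  then show ?thesis
  proof cases
    case (2 x y)
    then have "E x y" using assms unfolding is_walk_def by force
    with 2 show ?thesis by (simp add: dist2_def)
  qed (auto simp: dist2_def)
qed

lemma metric_dim_le_card: "resolving_set V E R \<Longrightarrow> metric_dim V E \<le> card R"
  unfolding metric_dim_def by (rule Least_le) blast

lemma metric_basis_exists: "resolving_set V E S \<Longrightarrow> \<exists>R. metric_basis V E R"
  unfolding metric_basis_def metric_dim_def by (rule LeastI_ex) blast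

locale diameter_two_graph =
  fixes V :: "'a set" and E :: "'a \<Rightarrow> 'a \<Rightarrow> bool"
  assumes simple: "simple_graph V E"
    and diameter: "diameter_le_two V E"
begin

lemma symp_E: "symp E"
  using simple by (rule simple_graph_symp)

lemma edge_in_V: "E x y \<Longrightarrow> x \<in> V \<and> y \<in> V"
  using simple by (simp add: simple_graph_def)

lemma no_loop: "\<not> E x x"
  using simple by (simp add: simple_graph_def)

lemma finite_V: "finite V"
  using simple by (simp add: simple_graph_def)

lemma walk_of_length_dist2:
  assumes "x \<in> V" "y \<in> V"
  shows "\<exists>xs. is_walk V E xs \<and> hd xs = x \<and> last xs = y \<and> length xs = Suc (dist2 E x y)"
proof (cases "x \<noteq> y \<and> \<not> E x y")
  case True
  then obtain z where "E x z" "E z y" using diameter assms by (auto simp: diameter_le_two_def)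
  moreover have "z \<in> V" using edge_in_V \<open>E x z\<close> by blast
  ultimately have "is_walk V E [x, z, y]"
    using assms by (auto simp: is_walk_def less_Suc_eq nth_Cons split: nat.splits)
  with True show ?thesis by (intro exI[of _ "[x, z, y]"]) (simp add: dist2_def)
next
  case False
  then have "is_walk V E (if x = y then [x] else [x, y])"
    using assms by (auto simp: is_walk_def less_Suc_eq)
  with False show ?thesis by (intro exI[of _ "if x = y then [x] else [x, y]"]) (auto simp: dist2_def)
qed

lemma gdist_eq_dist2: "x \<in> V \<Longrightarrow> y \<in> V \<Longrightarrow> gdist V E x y = dist2 E x y"
  unfolding gdist_def
  by (rule Least_equality) (use walk_of_length_dist2 dist2_less_length_walk in fastforce)+

lemma resolving_set_iff:
  "resolving_set V E R \<longleftrightarrow>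
     R \<subseteq> V \<and> (\<forall>x\<in>V. \<forall>y\<in>V. x \<noteq> y \<longrightarrow> (\<exists>r\<in>R. dist2 E r x \<noteq> dist2 E r y))"
  unfolding resolving_set_def by (auto simp: gdist_eq_dist2 subset_iff)

lemma resolving_setD:
  "resolving_set V E R \<Longrightarrow> x \<in> V \<Longrightarrow> y \<in> V \<Longrightarrow> x \<noteq> y \<Longrightarrow> \<exists>r\<in>R. dist2 E r x \<noteq> dist2 E r y"
  by (simp add: resolving_set_iff)

lemma resolving_set_vertices: "resolving_set V E V"
  unfolding resolving_set_iff by (auto simp: dist2_def)

lemma resolving_set_twin_mem:
  assumes "resolving_set V E R" "twins E a b" "a \<in> V" "b \<in> V"
  shows "a \<in> R \<or> b \<in> R"
proof -
  obtain r where "r \<in> R" "dist2 E r a \<noteq> dist2 E r b"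
    using resolving_setD[OF assms(1,3,4)] assms(2) by (auto simp: twins_def)
  moreover have "dist2 E r a = dist2 E r b" if "r \<noteq> a" "r \<noteq> b"
    using dist2_twins[OF assms(2)] dist2_commute[OF symp_E] that by metis
  ultimately show ?thesis by blast
qed

lemma resolving_set_transpose_twins:
  assumes "resolving_set V E R" "twins E a b" "a \<in> V" "b \<in> V"
  shows "resolving_set V E (transpose a b ` R)"
  unfolding resolving_set_iff
proof (intro conjI ballI impI)
  show "transpose a b ` R \<subseteq> V"
    using assms by (auto simp: resolving_set_def transpose_def)
next
  fix x y assume "x \<in> V" "y \<in> V" "x \<noteq> y"
  then have "transpose a b x \<in> V" "transpose a b y \<in> V" "transpose a b x \<noteq> transpose a b y"
    using assms(3,4) by (auto simp: transpose_def)
  then obtain r where r: "r \<in> R" "dist2 E r (transpose a b x) \<noteq> dist2 E r (transpose a b y)"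
    using resolving_setD[OF assms(1)] by blast
  then have "dist2 E (transpose a b r) x \<noteq> dist2 E (transpose a b r) y"
    using dist2_transpose_twins[OF symp_E assms(2), of "transpose a b r"] by simp
  then show "\<exists>r\<in>transpose a b ` R. dist2 E r x \<noteq> dist2 E r y"
    using r(1) by blast
qed

lemma metric_basis_transpose_twins:
  assumes "metric_basis V E R" "twins E a b" "a \<in> V" "b \<in> V"
  shows "metric_basis V E (transpose a b ` R)"
  using assms resolving_set_transpose_twins by (simp add: metric_basis_def card_image)

lemma resolving_set_Diff_true_twin:
  assumes R: "resolving_set V E R"
    and twin: "twins E v v'" "E v v'" "v' \<in> R"
    and witness: "r \<in> R" "r \<noteq> v" "\<not> E v r" "\<And>y. E v y \<Longrightarrow> y \<noteq> v' \<Longrightarrow> E r y"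
  shows "resolving_set V E (R - {v})"
proof -
  have "v' \<noteq> v" "E v' v" using twin symp_E by (auto simp: twins_def dest: sympD)
  have separate_v: "\<exists>s\<in>R - {v}. dist2 E s v \<noteq> dist2 E s y" if "y \<noteq> v" for y
  proof (cases "E v y \<and> y \<noteq> v'")
    case True
    have "\<not> E r v" using witness(3) symp_E by (blast dest: sympD)
    then have "dist2 E r v \<noteq> dist2 E r y"
      using True witness(2,4) by (simp add: dist2_def)
    then show ?thesis using witness(1,2) by blast
  next
    case False
    then have "y = v' \<or> \<not> E v' y" using twin(1) that by (auto simp: twins_def)
    then have "dist2 E v' v \<noteq> dist2 E v' y"
      using \<open>v' \<noteq> v\<close> \<open>E v' v\<close> that by (auto simp: dist2_def)
    then show ?thesis using twin(3) \<open>v' \<noteq> v\<close> by blast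
  qed
  have "\<exists>s\<in>R - {v}. dist2 E s x \<noteq> dist2 E s y" if xy: "x \<in> V" "y \<in> V" "x \<noteq> y" for x y
  proof -
    consider "x = v" | "y = v" | "x \<noteq> v" "y \<noteq> v" by blast
    then show ?thesis
    proof cases
      case 1
      then show ?thesis using separate_v[of y] xy(3) by blast
    next
      case 2
      then show ?thesis using separate_v[of x] xy(3) by (metis (mono_tags))
    next
      case 3
      obtain s where s: "s \<in> R" "dist2 E s x \<noteq> dist2 E s y"
        using resolving_setD[OF R xy] by blast
      then have "dist2 E v' x \<noteq> dist2 E v' y" if "s = v"
        using dist2_twin_separates[OF twin(1)] 3 xy(3) that by blast
      then show ?thesis using s twin(3) \<open>v' \<noteq> v\<close> by (cases "s = v") auto
    qed
  qed
  then show ?thesis using R by (auto simp: resolving_set_iff)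
qed

end

lemma compl_component_join:
  assumes "simple_graph V E" "component V (compl_edges V E) C" "x \<in> C" "y \<in> V - C"
  shows "E x y"
  using assms unfolding component_def compl_edges_def by blast

lemma diameter_le_two_compl_component:
  assumes "simple_graph V E" "component V (compl_edges V E) C" "C \<noteq> V"
  shows "diameter_le_two V E"
  unfolding diameter_le_two_def
proof (intro ballI impI)
  fix x y assume "x \<in> V" "y \<in> V" "x \<noteq> y" "\<not> E x y"
  then have "x \<in> C \<longleftrightarrow> y \<in> C"
    using assms(2) simple_graph_symp[OF assms(1)] by (auto simp: component_def compl_edges_def dest: sympD)
  moreover obtain c u where "c \<in> C" "u \<in> V - C"
    using assms(2,3) by (auto simp: component_def connected_graph_def)
  ultimately show "\<exists>z. E x z \<and> E z y"
    using compl_component_join[OF assms(1,2)] simple_graph_symp[OF assms(1)] \<open>x \<in> V\<close> \<open>y \<in> V\<close>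
    by (cases "x \<in> C") (blast dest: sympD)+
qed

lemma graph_iso_card: "graph_iso V E W F \<Longrightarrow> card V = card W"
  unfolding graph_iso_def using bij_betw_same_card by blast

lemma C4_compl_edge_iff:
  fixes i j :: nat
  assumes "i < 4" "j < 4"
  shows "i \<noteq> j \<and> \<not> C4_edges i j \<longleftrightarrow> j = (i + 2) mod 4"
proof -
  have four_cases: "k = 0 \<or> k = 1 \<or> k = 2 \<or> k = 3" if "k < (4::nat)" for k
    using that by linarith
  show ?thesis
    using four_cases[OF assms(1)] four_cases[OF assms(2)] by (elim disjE) (simp_all add: C4_edges_def)
qed

locale compl_C4_component =
  fixes V :: "'a set" and E :: "'a \<Rightarrow> 'a \<Rightarrow> bool" and C :: "'a set"
  assumes simple: "simple_graph V E"
    and component: "component V (compl_edges V E) C"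
    and iso_C4: "graph_iso C (induced (compl_edges V E) C) {0..<4} C4_edges"
    and proper: "C \<noteq> V"
begin

sublocale diameter_two_graph V E
  using simple diameter_le_two_compl_component[OF simple component proper]
  by unfold_locales

lemma card_C: "card C = 4"
  using graph_iso_card[OF iso_C4] by simp

lemma C_subset: "C \<subseteq> V"
  using component by (simp add: component_def)

lemma join: "x \<in> C \<Longrightarrow> y \<in> V - C \<Longrightarrow> E x y"
  using compl_component_join[OF simple component] .

lemma partner_exists: "u \<in> C \<Longrightarrow> \<exists>u'\<in>C. \<forall>z\<in>C. E u z \<longleftrightarrow> z = u'"
proof -
  assume "u \<in> C"
  obtain f where f: "bij_betw f C {0..<4}"
    and f_edges: "\<forall>u\<in>C. \<forall>w\<in>C. induced (compl_edges V E) C u w \<longleftrightarrow> C4_edges (f u) (f w)"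
    using iso_C4 unfolding graph_iso_def by blast
  have f_inj: "inj_on f C" and f_image: "f ` C = {0..<4}"
    using f by (auto simp: bij_betw_def)
  have f_less_4: "f w < 4" if "w \<in> C" for w
    using f_image that by (metis atLeastLessThan_iff imageI)
  define u' where "u' = inv_into C f ((f u + 2) mod 4)"
  have "u' \<in> C" "f u' = (f u + 2) mod 4"
    using f_image unfolding u'_def by (auto intro: inv_into_into f_inv_into_f)
  have "E u z \<longleftrightarrow> z = u'" if "z \<in> C" for z
  proof -
    have "E u z \<longleftrightarrow> u \<noteq> z \<and> \<not> C4_edges (f u) (f z)"
      using f_edges \<open>u \<in> C\<close> that C_subset simple
      by (auto simp: induced_def compl_edges_def simple_graph_def)
    also have "\<dots> \<longleftrightarrow> f u \<noteq> f z \<and> \<not> C4_edges (f u) (f z)"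
      using inj_on_eq_iff[OF f_inj \<open>u \<in> C\<close> that] by simp
    also have "\<dots> \<longleftrightarrow> f z = (f u + 2) mod 4"
      using C4_compl_edge_iff f_less_4 \<open>u \<in> C\<close> that by simp
    also have "\<dots> \<longleftrightarrow> z = u'"
      using \<open>f u' = (f u + 2) mod 4\<close> \<open>u' \<in> C\<close> that inj_on_eq_iff[OF f_inj] by metis
    finally show ?thesis .
  qed
  with \<open>u' \<in> C\<close> show ?thesis by blast
qed

lemma true_twins_in_C:
  assumes "u \<in> C" "u' \<in> C" "E u u'"
  shows "twins E u u'"
proof -
  have "E u' u" using assms(3) symp_E by (blast dest: sympD)
  have "E u z \<longleftrightarrow> E u' z" if "z \<noteq> u" "z \<noteq> u'" for z
  proof (cases "z \<in> C")
    case True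
    then show ?thesis
      using partner_exists[OF assms(1)] partner_exists[OF assms(2)] assms \<open>E u' u\<close> that by metis
  next
    case False
    then show ?thesis using join[of u z] join[of u' z] assms(1,2) edge_in_V by blast
  qed
  moreover have "u \<noteq> u'" using assms(3) no_loop by blast
  ultimately show ?thesis by (simp add: twins_def)
qed

lemma metric_basis_excludes_true_twin:
  assumes R: "metric_basis V E R" "v \<in> R"
    and v: "v \<in> C" "v' \<in> C" "E v v'"
  shows "v' \<notin> R"
proof
  assume "v' \<in> R"
  have neighbours_v: "z = v'" if "z \<in> C" "E v z" for z
    using partner_exists[OF v(1)] v that by metis
  have "v \<noteq> v'" using v(3) no_loop by blast
  then have "card (C - {v, v'}) = 2" using card_C v by (simp add: card_Diff_subset)
  then have "C - {v, v'} \<noteq> {}" by (metis card.empty zero_neq_numeral)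
  then obtain w where w: "w \<in> C" "w \<noteq> v" "w \<noteq> v'" by blast
  obtain w' where w': "w' \<in> C" "E w w'"
    using partner_exists[OF w(1)] by blast
  have "E v' v" using v(3) symp_E by (blast dest: sympD)
  then have neighbours_v': "z = v" if "z \<in> C" "E v' z" for z
    using partner_exists[OF v(2)] v that by metis
  have "w' \<noteq> v" "w' \<noteq> v'"
    using neighbours_v neighbours_v' w w' symp_E by (metis sympD)+
  obtain r where r: "r \<in> R" "r \<in> {w, w'}"
    using resolving_set_twin_mem[OF _ true_twins_in_C[OF w(1) w']] R(1) w(1) w'(1) C_subset
    by (auto simp: metric_basis_def)
  then have "r \<in> C" "r \<noteq> v" "r \<noteq> v'"
    using w w' \<open>w' \<noteq> v\<close> \<open>w' \<noteq> v'\<close> by auto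
  then have "\<not> E v r" using neighbours_v by blast
  moreover have "E r y" if "E v y" "y \<noteq> v'" for y
    using neighbours_v[of y] that edge_in_V join \<open>r \<in> C\<close> by blast
  ultimately have "resolving_set V E (R - {v})"
    using resolving_set_Diff_true_twin true_twins_in_C[OF v] v(3) \<open>v' \<in> R\<close> r(1) \<open>r \<noteq> v\<close> R(1)
    by (simp add: metric_basis_def)
  then have "card R \<le> card (R - {v})"
    using metric_dim_le_card R(1) by (simp add: metric_basis_def)
  moreover have "finite R"
    using R(1) finite_subset finite_V by (auto simp: metric_basis_def resolving_set_def)
  ultimately show False using R(2) card_Diff1_less by fastforce
qed

lemma not_basis_forced: "v \<in> C \<Longrightarrow> \<not> basis_forced V E v"
proof -
  assume "v \<in> C"
  then obtain v' where v': "v' \<in> C" "E v v'" using partner_exists by blast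
  obtain R where R: "metric_basis V E R"
    using metric_basis_exists resolving_set_vertices by blast
  show "\<not> basis_forced V E v"
  proof (cases "v \<in> R")
    case True
    then have "v \<notin> transpose v v' ` R"
      using metric_basis_excludes_true_twin[OF R True \<open>v \<in> C\<close> v'] by (auto simp: transpose_def)
    moreover have "metric_basis V E (transpose v v' ` R)"
      using metric_basis_transpose_twins[OF R true_twins_in_C[OF \<open>v \<in> C\<close> v']] \<open>v \<in> C\<close> v' C_subset
      by blast
    ultimately show ?thesis by (auto simp: basis_forced_def)
  qed (use R in \<open>auto simp: basis_forced_def\<close>)
qed

end

theorem lemma8:
  fixes V :: "'a set" and E :: "'a \<Rightarrow> 'a \<Rightarrow> bool" and C :: "'a set"
  assumes "simple_graph V E"
    and "connected_graph V E"
    and "card V \<ge> 5"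
    and "component V (compl_edges V E) C"
    and "graph_iso C (induced (compl_edges V E) C) {0..<4} C4_edges"
  shows "\<forall>v\<in>C. \<not> basis_forced V E v"
proof -
  have "card C = 4" using graph_iso_card[OF assms(5)] by simp
  with assms(3) have "C \<noteq> V" by auto
  with assms(1,4,5) interpret compl_C4_component V E C
    by unfold_locales
  show ?thesis using not_basis_forced by blast
qed

end
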